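(* Let $M$ be a smooth $n$-manifold with a torsion-free linear connection $\nabla$ and a symmetric $(0,2)$-tensor field $c$, and let $\widetilde{\nabla}$ be the linear connection on $T^{\ast}M$ given in the adapted frame by $\widetilde{\nabla}_{E_{\overline{i}}}E_{\overline{j}}=0$, $\widetilde{\nabla}_{E_{\overline{i}}}E_{j}=0$, $\widetilde{\nabla}_{E_{i}}E_{\overline{j}}=-\Gamma^{j}_{ih}E_{\overline{h}}$, $\widetilde{\nabla}_{E_{i}}E_{j}=\Gamma^{h}_{ij}E_{h}+\tfrac12(\nabla_i c_{jh}+\nabla_j c_{ih}-\nabla_h c_{ij})E_{\overline{h}}$. Then the curvature tensor $\widetilde R(X,Y)Z=\widetilde\nabla_X\widetilde\nabla_YZ-\widetilde\nabla_Y\widetilde\nabla_XZ-\widetilde\nabla_{[X,Y]}Z$ of $\widetilde\nabla$ satisfies $$\widetilde R(E_i,E_j)E_k=R_{ijk}^{\ \ \ h}E_h+\tfrac12\Big\{\nabla_i(\nabla_kc_{jh}-\nabla_hc_{jk})-\nabla_j(\nabla_kc_{ih}-\nabla_hc_{ik})-R_{ijk}^{\ \ \ m}c_{mh}-R_{ijh}^{\ \ \ m}c_{km}\Big\}E_{\overline h},$$ $$\widetilde R(E_i,E_j)E_{\overline k}=R_{jih}^{\ \ \ k}E_{\overline h},$$ and $\widetilde R(E_i,E_{\overline j})E_k=\widetilde R(E_i,E_{\overline j})E_{\overline k}=\widetilde R(E_{\overline i},E_j)E_k=\widetilde R(E_{\overline i},E_j)E_{\overline k}=\widetilde R(E_{\overline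 i},E_{\overline j})E_k=\widetilde R(E_{\overline i},E_{\overline j})E_{\overline k}=0$.
   Context: Summation convention; $\overline{i}=n+i$. $\Gamma^h_{ij}$ are the coefficients of $\nabla$ in local coordinates $(x^i)$; the curvature of $\nabla$ is $R(X,Y)=\nabla_X\nabla_Y-\nabla_Y\nabla_X-\nabla_{[X,Y]}$ with $R(\partial_i,\partial_j)\partial_k=R_{ijk}^{\ \ \ h}\partial_h$. $\nabla_ic_{jk}$ are the components of $\nabla c$ and $\nabla_i(\nabla_kc_{jh})$ those of $\nabla\nabla c$. On $T^{\ast}M$ use induced coordinates $(x^i,p_i)$, $\partial_{\overline i}=\partial/\partial p_i$, and the adapted frame $E_j=\partial_j+p_a\Gamma^a_{hj}\partial_{\overline h}$, $E_{\overline j}=\partial_{\overline j}$. *)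

theory Defs
  imports "HOL-Analysis.Analysis"
begin

text \<open>Everything is done in one coordinate chart: U is an open subset of R^n
 (coordinates x^i, indices of finite type 'n), and T*U = U x R^n with induced
 coordinates (x^i, p_i).  Indices of T*U are of type 'n + 'n: Inl i is the index
 i, Inr i is the barred index (n+i).  A vector field on T*U is given by its
 components w.r.t. the coordinate frame (d_i, d_{bar i}).\<close>

type_synonym 'n pt = "(real^'n) \<times> (real^'n)"
type_synonym 'n vf = "'n pt \<Rightarrow> ('n + 'n) \<Rightarrow> real"

definition dirderiv :: "'a::real_normed_vector \<Rightarrow> ('a \<Rightarrow> real) \<Rightarrow> 'a \<Rightarrow> real" where
  "dirderiv v f z = deriv (\<lambda>t. f (z + t *\<^sub>R v)) 0"

definition pdx :: "'n::finite \<Rightarrow> (real^'n \<Rightarrow> real) \<Rightarrow> real^'n \<Rightarrow> real" where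
  "pdx i f x = dirderiv (axis i 1) f x"

fun Ck_on :: "nat \<Rightarrow> (real^'n::finite) set \<Rightarrow> (real^'n \<Rightarrow> real) \<Rightarrow> bool" where
  "Ck_on 0 U f = continuous_on U f"
| "Ck_on (Suc k) U f = (f differentiable_on U \<and> (\<forall>i. Ck_on k U (pdx i f)))"

definition smooth_on :: "(real^'n::finite) set \<Rightarrow> (real^'n \<Rightarrow> real) \<Rightarrow> bool" where
  "smooth_on U f = (\<forall>k. Ck_on k U f)"

text \<open>Objects on M (in the chart).  Gam h i j x = Gamma^h_{ij}(x), c i j x = c_{ij}(x).\<close>

text \<open>Curvature components: R(d_i,d_j)d_k = R_{ijk}^h d_h, with nabla_{d_i} d_j = Gamma^h_{ij} d_h.\<close>
definition Rc :: "('n::finite \<Rightarrow> 'n \<Rightarrow> 'n \<Rightarrow> real^'n \<Rightarrow> real) \<Rightarrow> 'n \<Rightarrow> 'n \<Rightarrow> 'n \<Rightarrow> 'n \<Rightarrow> real^'n \<Rightarrow> real" where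
  "Rc Gam i j k h x =
     pdx i (Gam h j k) x - pdx j (Gam h i k) x
     + (\<Sum>a\<in>UNIV. Gam h i a x * Gam a j k x) - (\<Sum>a\<in>UNIV. Gam h j a x * Gam a i k x)"

definition nc :: "('n::finite \<Rightarrow> 'n \<Rightarrow> 'n \<Rightarrow> real^'n \<Rightarrow> real) \<Rightarrow> ('n \<Rightarrow> 'n \<Rightarrow> real^'n \<Rightarrow> real)
    \<Rightarrow> 'n \<Rightarrow> 'n \<Rightarrow> 'n \<Rightarrow> real^'n \<Rightarrow> real" where
  "nc Gam c i j k x = pdx i (c j k) x
     - (\<Sum>a\<in>UNIV. Gam a i j x * c a k x) - (\<Sum>a\<in>UNIV. Gam a i k x * c j a x)"

text \<open>nnc Gam c i k j h = nabla_i (nabla_k c_{jh}), the components of nabla nabla c.\<close>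
definition nnc :: "('n::finite \<Rightarrow> 'n \<Rightarrow> 'n \<Rightarrow> real^'n \<Rightarrow> real) \<Rightarrow> ('n \<Rightarrow> 'n \<Rightarrow> real^'n \<Rightarrow> real)
    \<Rightarrow> 'n \<Rightarrow> 'n \<Rightarrow> 'n \<Rightarrow> 'n \<Rightarrow> real^'n \<Rightarrow> real" where
  "nnc Gam c i k j h x = pdx i (nc Gam c k j h) x
     - (\<Sum>a\<in>UNIV. Gam a i k x * nc Gam c a j h x)
     - (\<Sum>a\<in>UNIV. Gam a i j x * nc Gam c k a h x)
     - (\<Sum>a\<in>UNIV. Gam a i h x * nc Gam c k j a x)"

definition cdir :: "('n::finite) + 'n \<Rightarrow> 'n pt" where
  "cdir A = (case A of Inl i \<Rightarrow> (axis i 1, 0) | Inr i \<Rightarrow> (0, axis i 1))"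

definition pd :: "('n::finite) + 'n \<Rightarrow> ('n pt \<Rightarrow> real) \<Rightarrow> 'n pt \<Rightarrow> real" where
  "pd A f z = dirderiv (cdir A) f z"

definition vapply :: "('n::finite) vf \<Rightarrow> ('n pt \<Rightarrow> real) \<Rightarrow> 'n pt \<Rightarrow> real" where
  "vapply X f z = (\<Sum>A\<in>UNIV. X z A * pd A f z)"

definition lie :: "('n::finite) vf \<Rightarrow> 'n vf \<Rightarrow> 'n vf" where
  "lie X Y = (\<lambda>z B. vapply X (\<lambda>w. Y w B) z - vapply Y (\<lambda>w. X w B) z)"

definition Eframe :: "('n::finite \<Rightarrow> 'n \<Rightarrow> 'n \<Rightarrow> real^'n \<Rightarrow> real) \<Rightarrow> 'n + 'n \<Rightarrow> 'n vf" where
  "Eframe Gam A z B = (case A of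
      Inl j \<Rightarrow> (case B of Inl h \<Rightarrow> (if h = j then 1 else 0)
                        | Inr h \<Rightarrow> (\<Sum>a\<in>UNIV. snd z $ a * Gam a h j (fst z)))
    | Inr j \<Rightarrow> (if B = Inr j then 1 else 0))"

text \<open>Components of a vector field with respect to the adapted frame
  (Y = frame_coord Y ^A E_A).\<close>
definition frame_coord :: "('n::finite \<Rightarrow> 'n \<Rightarrow> 'n \<Rightarrow> real^'n \<Rightarrow> real) \<Rightarrow> 'n vf \<Rightarrow> 'n pt \<Rightarrow> 'n + 'n \<Rightarrow> real" where
  "frame_coord Gam Y z A = (case A of
      Inl h \<Rightarrow> Y z (Inl h)
    | Inr h \<Rightarrow> Y z (Inr h) - (\<Sum>j\<in>UNIV. Y z (Inl j) * (\<Sum>a\<in>UNIV. snd z $ a * Gam a h j (fst z))))"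

text \<open>Adapted-frame components of tnabla_{E_A} E_B, as prescribed in the statement.\<close>
definition connEE :: "('n::finite \<Rightarrow> 'n \<Rightarrow> 'n \<Rightarrow> real^'n \<Rightarrow> real) \<Rightarrow> ('n \<Rightarrow> 'n \<Rightarrow> real^'n \<Rightarrow> real)
    \<Rightarrow> 'n + 'n \<Rightarrow> 'n + 'n \<Rightarrow> 'n pt \<Rightarrow> 'n + 'n \<Rightarrow> real" where
  "connEE Gam c A B z C = (case (A, B) of
      (Inr i, _) \<Rightarrow> 0
    | (Inl i, Inr j) \<Rightarrow> (case C of Inl h \<Rightarrow> 0 | Inr h \<Rightarrow> - Gam j i h (fst z))
    | (Inl i, Inl j) \<Rightarrow> (case C of Inl h \<Rightarrow> Gam h i j (fst z)
          | Inr h \<Rightarrow> (1/2) * (nc Gam c i j h (fst z) + nc Gam c j i h (fst z) - nc Gam c h i j (fst z))))"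

text \<open>The linear connection tnabla on T*U determined by these frame values
 (via linearity and the Leibniz rule):
 tnabla_X Y = (X(Y^C) + X^A Y^D (tnabla_{E_A}E_D)^C) E_C  in frame components.\<close>
definition tnabla :: "('n::finite \<Rightarrow> 'n \<Rightarrow> 'n \<Rightarrow> real^'n \<Rightarrow> real) \<Rightarrow> ('n \<Rightarrow> 'n \<Rightarrow> real^'n \<Rightarrow> real)
    \<Rightarrow> 'n vf \<Rightarrow> 'n vf \<Rightarrow> 'n vf" where
  "tnabla Gam c X Y = (\<lambda>z B. \<Sum>C\<in>UNIV.
      (vapply X (\<lambda>w. frame_coord Gam Y w C) z
       + (\<Sum>A\<in>UNIV. \<Sum>D\<in>UNIV. frame_coord Gam X z A * frame_coord Gam Y z D * connEE Gam c A D z C))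
      * Eframe Gam C z B)"

definition curv :: "('n vf \<Rightarrow> 'n vf \<Rightarrow> 'n vf) \<Rightarrow> 'n vf \<Rightarrow> 'n vf \<Rightarrow> 'n vf \<Rightarrow> ('n::finite) vf" where
  "curv nab X Y Z = (\<lambda>z B. nab X (nab Y Z) z B - nab Y (nab X Z) z B - nab (lie X Y) Z z B)"

end

theory Submission
  imports Defs
begin

text \<open>In the adapted frame the coefficients tGamma^C_{AB} (connEE) of the connection depend only
  on the base point, the bracket of two frame fields is vertical, and the connection differentiates
  frame fields trivially in vertical directions.  Hence tR(E_A, E_B) E_D has the frame components
  E_A tGamma^C_{BD} - E_B tGamma^C_{AD} + tGamma^{D'}_{BD} tGamma^C_{AD'} - tGamma^{D'}_{AD} tGamma^C_{BD'},
  which vanish as soon as A or B is vertical.  For horizontal A, B, D the horizontal components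
  are R_{ijk}^h; in the vertical ones the partial derivatives of nabla c are rewritten as second
  covariant derivatives, and what remains is the Ricci identity
  nabla_i nabla_j c_{kh} - nabla_j nabla_i c_{kh} = - R_{ijk}^m c_{mh} - R_{ijh}^m c_{km},
  which rests on the symmetry of Gamma and of mixed second partial derivatives.\<close>

section \<open>Directional derivatives and the symmetry of mixed derivatives\<close>

lemma has_real_derivative_along_line:
  fixes f :: "'a::real_normed_vector \<Rightarrow> real"
  assumes f': "(f has_derivative f') (at y)" and y: "w + s *\<^sub>R u = y"
  shows "((\<lambda>t. f (w + t *\<^sub>R u)) has_real_derivative f' u) (at s)"
proof -
  have "((\<lambda>t. w + t *\<^sub>R u) has_derivative (\<lambda>t. t *\<^sub>R u)) (at s)"
    by (auto intro!: derivative_eq_intros)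
  then have "((\<lambda>t. f (w + t *\<^sub>R u)) has_derivative (\<lambda>t. f' (t *\<^sub>R u))) (at s)"
    using has_derivative_compose f' y by blast
  moreover have "(\<lambda>t. f' (t *\<^sub>R u)) = (*) (f' u)"
    using has_derivative_linear[OF f'] by (auto simp: linear_scale)
  ultimately show ?thesis by (simp add: has_field_derivative_def)
qed

lemma dirderiv_eqI:
  "((\<lambda>t. f (y + t *\<^sub>R u)) has_real_derivative D) (at 0) \<Longrightarrow> dirderiv u f y = D"
  unfolding dirderiv_def by (rule DERIV_imp_deriv)

lemma has_real_derivative_dirderiv:
  fixes f :: "'a::real_normed_vector \<Rightarrow> real"
  assumes "f differentiable (at y)" and "w + s *\<^sub>R u = y"
  shows "((\<lambda>t. f (w + t *\<^sub>R u)) has_real_derivative dirderiv u f y) (at s)"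
proof -
  obtain f' where f': "(f has_derivative f') (at y)"
    using assms(1) by (auto simp: differentiable_def)
  have "dirderiv u f y = f' u"
    by (rule dirderiv_eqI, rule has_real_derivative_along_line[OF f']) simp
  with has_real_derivative_along_line[OF f' assms(2)] show ?thesis by simp
qed

lemma second_difference_mean_value:
  fixes f :: "'a::real_normed_vector \<Rightarrow> real"
  assumes h: "0 < h"
    and df: "\<And>a b. 0 \<le> a \<Longrightarrow> a \<le> h \<Longrightarrow> 0 \<le> b \<Longrightarrow> b \<le> h \<Longrightarrow>
               f differentiable (at (x + a *\<^sub>R u + b *\<^sub>R v))"
    and dfu: "\<And>a b. 0 \<le> a \<Longrightarrow> a \<le> h \<Longrightarrow> 0 \<le> b \<Longrightarrow> b \<le> h \<Longrightarrow>
               dirderiv u f differentiable (at (x + a *\<^sub>R u + b *\<^sub>R v))"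
  shows "\<exists>a b. 0 < a \<and> a < h \<and> 0 < b \<and> b < h \<and>
           f (x + h *\<^sub>R u + h *\<^sub>R v) - f (x + h *\<^sub>R u) - f (x + h *\<^sub>R v) + f x
             = h\<^sup>2 * dirderiv v (dirderiv u f) (x + a *\<^sub>R u + b *\<^sub>R v)"
proof -
  define P where "P a b = x + a *\<^sub>R u + b *\<^sub>R v" for a b
  define fu where "fu = dirderiv u f"
  have "\<exists>a. 0 < a \<and> a < h \<and>
      (f (P h h) - f (P h 0)) - (f (P 0 h) - f (P 0 0)) = (h - 0) * (fu (P a h) - fu (P a 0))"
  proof (rule MVT2[OF h])
    fix a assume a: "0 \<le> a" "a \<le> h"
    have "((\<lambda>a. f ((x + h *\<^sub>R v) + a *\<^sub>R u)) has_real_derivative fu (P a h)) (at a)"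
      unfolding fu_def P_def
      by (rule has_real_derivative_dirderiv[OF df[of a h]]) (use a h in \<open>auto simp: algebra_simps\<close>)
    moreover have "((\<lambda>a. f (x + a *\<^sub>R u)) has_real_derivative fu (P a 0)) (at a)"
      unfolding fu_def P_def
      by (rule has_real_derivative_dirderiv[OF df[of a 0]]) (use a h in auto)
    ultimately have "((\<lambda>a. f ((x + h *\<^sub>R v) + a *\<^sub>R u) - f (x + a *\<^sub>R u)) has_real_derivative
        fu (P a h) - fu (P a 0)) (at a)"
      by (rule DERIV_diff)
    then show "((\<lambda>a. f (P a h) - f (P a 0)) has_real_derivative
        fu (P a h) - fu (P a 0)) (at a)"
      by (simp add: P_def algebra_simps)
  qed
  then obtain a where a: "0 < a" "a < h"
    and first: "(f (P h h) - f (P h 0)) - (f (P 0 h) - f (P 0 0)) = h * (fu (P a h) - fu (P a 0))"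
    by auto
  have "\<exists>b. 0 < b \<and> b < h \<and> fu (P a h) - fu (P a 0) = (h - 0) * dirderiv v fu (P a b)"
  proof (rule MVT2[OF h])
    fix b assume "0 \<le> b" "b \<le> h"
    then have "((\<lambda>b. fu ((x + a *\<^sub>R u) + b *\<^sub>R v)) has_real_derivative dirderiv v fu (P a b)) (at b)"
      unfolding fu_def using a by (auto intro!: has_real_derivative_dirderiv dfu simp: P_def)
    then show "((\<lambda>b. fu (P a b)) has_real_derivative dirderiv v fu (P a b)) (at b)"
      by (simp add: P_def)
  qed
  then obtain b where "0 < b" "b < h" "fu (P a h) - fu (P a 0) = h * dirderiv v fu (P a b)"
    by auto
  with a first show ?thesis
    by (intro exI[of _ a] exI[of _ b]) (simp add: P_def fu_def power2_eq_square algebra_simps)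
qed

lemma mixed_dirderivs_meet_in_ball:
  fixes f :: "'a::real_normed_vector \<Rightarrow> real"
  assumes d: "d > 0" "ball x d \<subseteq> U"
    and df: "\<And>y. y \<in> U \<Longrightarrow> f differentiable (at y)"
    and dfu: "\<And>y. y \<in> U \<Longrightarrow> dirderiv u f differentiable (at y)"
    and dfv: "\<And>y. y \<in> U \<Longrightarrow> dirderiv v f differentiable (at y)"
  shows "\<exists>p\<in>ball x d. \<exists>q\<in>ball x d. dirderiv v (dirderiv u f) p = dirderiv u (dirderiv v f) q"
proof -
  define K where "K = norm u + norm v + 1"
  have K: "K > 0" "norm u + norm v < K"
    using norm_ge_zero[of u] norm_ge_zero[of v] unfolding K_def by linarith+
  define h where "h = d / (2 * K)"
  have h: "h > 0" using d K by (simp add: h_def)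
  have near: "x + a *\<^sub>R u + b *\<^sub>R v \<in> ball x d"
    if "0 \<le> a" "a \<le> h" "0 \<le> b" "b \<le> h" for a b
  proof -
    have "norm (a *\<^sub>R u + b *\<^sub>R v) \<le> h * (norm u + norm v)"
      using that norm_triangle_ineq[of "a *\<^sub>R u" "b *\<^sub>R v"]
        mult_right_mono[of a h "norm u"] mult_right_mono[of b h "norm v"]
      by (simp add: distrib_left)
    also have "\<dots> < h * (2 * K)"
      using h K by simp
    also have "\<dots> = d"
      using K by (simp add: h_def)
    finally show ?thesis by (simp add: dist_norm norm_minus_commute add.assoc add.commute)
  qed
  have inU: "x + a *\<^sub>R u + b *\<^sub>R v \<in> U"
    if "0 \<le> a" "a \<le> h" "0 \<le> b" "b \<le> h" for a b
    using near[OF that] d(2) by blast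
  have swap: "x + a *\<^sub>R v + b *\<^sub>R u = x + b *\<^sub>R u + a *\<^sub>R v" for a b
    by (simp add: algebra_simps)
  \<comment> \<open>Both mixed derivatives compute the same second difference of f.\<close>
  obtain a b where ab: "0 < a" "a < h" "0 < b" "b < h"
    and uv: "f (x + h *\<^sub>R u + h *\<^sub>R v) - f (x + h *\<^sub>R u) - f (x + h *\<^sub>R v) + f x
             = h\<^sup>2 * dirderiv v (dirderiv u f) (x + a *\<^sub>R u + b *\<^sub>R v)"
    using second_difference_mean_value[where f=f and x=x and u=u and v=v, OF h df dfu] inU
    by blast
  obtain b' a' where ab': "0 < b'" "b' < h" "0 < a'" "a' < h"
    and vu: "f (x + h *\<^sub>R v + h *\<^sub>R u) - f (x + h *\<^sub>R v) - f (x + h *\<^sub>R u) + f x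
             = h\<^sup>2 * dirderiv u (dirderiv v f) (x + b' *\<^sub>R v + a' *\<^sub>R u)"
    using second_difference_mean_value[where f=f and x=x and u=v and v=u, OF h df dfv] inU
    unfolding swap by blast
  have "dirderiv v (dirderiv u f) (x + a *\<^sub>R u + b *\<^sub>R v)
      = dirderiv u (dirderiv v f) (x + a' *\<^sub>R u + b' *\<^sub>R v)"
    using uv vu h unfolding swap by (simp add: algebra_simps)
  with near ab ab' show ?thesis by force
qed

lemma dirderiv_commute:
  fixes f :: "'a::real_normed_vector \<Rightarrow> real"
  assumes U: "open U" and xU: "x \<in> U"
    and df: "\<And>y. y \<in> U \<Longrightarrow> f differentiable (at y)"
    and dfu: "\<And>y. y \<in> U \<Longrightarrow> dirderiv u f differentiable (at y)"
    and dfv: "\<And>y. y \<in> U \<Longrightarrow> dirderiv v f differentiable (at y)"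
    and cuv: "continuous_on U (dirderiv v (dirderiv u f))"
    and cvu: "continuous_on U (dirderiv u (dirderiv v f))"
  shows "dirderiv v (dirderiv u f) x = dirderiv u (dirderiv v f) x"
proof (rule ccontr)
  define A where "A = dirderiv v (dirderiv u f)"
  define B where "B = dirderiv u (dirderiv v f)"
  assume "dirderiv v (dirderiv u f) x \<noteq> dirderiv u (dirderiv v f) x"
  moreover define \<epsilon> where "\<epsilon> = \<bar>A x - B x\<bar> / 2"
  ultimately have \<epsilon>: "\<epsilon> > 0" by (simp add: A_def B_def)
  have "isCont A x" "isCont B x"
    using cuv cvu U xU by (simp_all add: A_def B_def continuous_on_eq_continuous_at)
  then obtain dA dB where "dA > 0" "\<forall>y. dist y x < dA \<longrightarrow> dist (A y) (A x) < \<epsilon>"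
    and "dB > 0" "\<forall>y. dist y x < dB \<longrightarrow> dist (B y) (B x) < \<epsilon>"
    using \<epsilon> unfolding continuous_at_eps_delta by blast
  moreover obtain r where "r > 0" "ball x r \<subseteq> U"
    using U xU open_contains_ball by blast
  ultimately obtain d where d: "d > 0" "ball x d \<subseteq> U"
    and closeA: "\<And>y. y \<in> ball x d \<Longrightarrow> dist (A y) (A x) < \<epsilon>"
    and closeB: "\<And>y. y \<in> ball x d \<Longrightarrow> dist (B y) (B x) < \<epsilon>"
    by (intro that[of "min r (min dA dB)"]) (auto simp: dist_commute)
  then obtain p q where "p \<in> ball x d" "q \<in> ball x d" "A p = B q"
    using mixed_dirderivs_meet_in_ball[OF d df dfu dfv] unfolding A_def B_def by blast
  with closeA closeB have "dist (B q) (A x) < \<epsilon>" "dist (B q) (B x) < \<epsilon>"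
    by metis+
  then show False
    unfolding \<epsilon>_def dist_real_def by (simp add: abs_real_def split: if_splits)
qed

section \<open>Partial derivatives in the chart\<close>

lemma has_real_derivative_pdx:
  "f differentiable (at x) \<Longrightarrow> ((\<lambda>t. f (x + t *\<^sub>R axis i 1)) has_real_derivative pdx i f x) (at 0)"
  unfolding pdx_def by (rule has_real_derivative_dirderiv) simp_all

lemma pdx_eqI:
  "((\<lambda>t. f (x + t *\<^sub>R axis i 1)) has_real_derivative D) (at 0) \<Longrightarrow> pdx i f x = D"
  unfolding pdx_def by (rule dirderiv_eqI)

lemma pdx_const [simp]: "pdx i (\<lambda>y. k) x = 0"
  by (simp add: pdx_def dirderiv_def)

lemma pdx_add:
  assumes "f differentiable (at x)" "g differentiable (at x)"
  shows "pdx i (\<lambda>y. f y + g y) x = pdx i f x + pdx i g x"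
  by (rule pdx_eqI) (use DERIV_add[OF has_real_derivative_pdx[OF assms(1)] has_real_derivative_pdx[OF assms(2)]] in simp)

lemma pdx_diff:
  assumes "f differentiable (at x)" "g differentiable (at x)"
  shows "pdx i (\<lambda>y. f y - g y) x = pdx i f x - pdx i g x"
  by (rule pdx_eqI) (use DERIV_diff[OF has_real_derivative_pdx[OF assms(1)] has_real_derivative_pdx[OF assms(2)]] in simp)

lemma pdx_mult:
  assumes "f differentiable (at x)" "g differentiable (at x)"
  shows "pdx i (\<lambda>y. f y * g y) x = pdx i f x * g x + f x * pdx i g x"
  by (rule pdx_eqI)
    (use DERIV_mult[OF has_real_derivative_pdx[OF assms(1)] has_real_derivative_pdx[OF assms(2)]] in
      \<open>simp add: algebra_simps\<close>)

lemma pdx_cmult: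
  assumes "f differentiable (at x)"
  shows "pdx i (\<lambda>y. k * f y) x = k * pdx i f x"
  by (rule pdx_eqI) (use DERIV_cmult[OF has_real_derivative_pdx[OF assms], of k] in simp)

lemma pdx_minus:
  assumes "f differentiable (at x)"
  shows "pdx i (\<lambda>y. - f y) x = - pdx i f x"
  by (rule pdx_eqI) (use DERIV_minus[OF has_real_derivative_pdx[OF assms]] in simp)

lemma pdx_sum:
  assumes "\<And>a. a \<in> A \<Longrightarrow> f a differentiable (at x)"
  shows "pdx i (\<lambda>y. \<Sum>a\<in>A. f a y) x = (\<Sum>a\<in>A. pdx i (f a) x)"
  by (rule pdx_eqI) (rule DERIV_sum, rule has_real_derivative_pdx[OF assms])

lemma smooth_on_pdx: "smooth_on U f \<Longrightarrow> smooth_on U (pdx i f)"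
  unfolding smooth_on_def by (metis Ck_on.simps(2))

lemma smooth_on_imp_differentiable:
  "smooth_on U f \<Longrightarrow> open U \<Longrightarrow> x \<in> U \<Longrightarrow> f differentiable (at x)"
  unfolding smooth_on_def by (metis Ck_on.simps(2) differentiable_on_eq_differentiable_at)

lemma smooth_on_imp_continuous_on: "smooth_on U f \<Longrightarrow> continuous_on U f"
  unfolding smooth_on_def by (metis Ck_on.simps(1))

lemma pdx_commute:
  assumes f: "smooth_on U f" and U: "open U" "x \<in> U"
  shows "pdx i (pdx j f) x = pdx j (pdx i f) x"
proof -
  have pdx_dirderiv: "pdx k g = dirderiv (axis k 1) g" for k and g :: "real^'a \<Rightarrow> real"
    by (simp add: pdx_def fun_eq_iff)
  have "dirderiv (axis i 1) (dirderiv (axis j 1) f) x = dirderiv (axis j 1) (dirderiv (axis i 1) f) x"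
    using smooth_on_imp_differentiable[OF _ U(1)] f
    by (intro dirderiv_commute[OF U])
      (simp_all add: pdx_dirderiv[symmetric] smooth_on_pdx smooth_on_imp_continuous_on)
  then show ?thesis by (simp add: pdx_dirderiv)
qed

section \<open>Frame components of the connection and of its curvature\<close>

lemma sum_UNIV_Plus:
  fixes f :: "'a::finite + 'b::finite \<Rightarrow> 'c::comm_monoid_add"
  shows "(\<Sum>C\<in>UNIV. f C) = (\<Sum>i\<in>UNIV. f (Inl i)) + (\<Sum>i\<in>UNIV. f (Inr i))"
  using sum.Plus[of "UNIV::'a set" "UNIV::'b set" f] by (simp add: comp_def)

lemma sum_if_const_cond: "(\<Sum>x\<in>S. if P then f x else 0) = (if P then sum f S else 0)"
  by simp

lemmas delta_sum_simps =
  if_distrib[of "\<lambda>x. x * _"] if_distrib[of "\<lambda>x. _ * x"] sum.delta sum.delta' sum_if_const_cond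

lemma vapply_const [simp]: "vapply X (\<lambda>w. k) z = 0"
  by (simp add: vapply_def pd_def dirderiv_def)

lemma frame_coord_Eframe: "frame_coord Gam (Eframe Gam A) z C = (if C = A then 1 else 0)"
  by (cases A; cases C) (simp_all add: frame_coord_def Eframe_def delta_sum_simps cong: if_cong)

lemma frame_coord_frame_combination:
  "frame_coord Gam (\<lambda>z B. \<Sum>C\<in>UNIV. f z C * Eframe Gam C z B) z D = f z D"
  by (cases D) (simp_all add: frame_coord_def Eframe_def sum_UNIV_Plus sum_distrib_right delta_sum_simps
      cong: if_cong)

lemma frame_coord_tnabla:
  "frame_coord Gam (tnabla Gam c X Y) z C =
     vapply X (\<lambda>w. frame_coord Gam Y w C) z
     + (\<Sum>A\<in>UNIV. \<Sum>D\<in>UNIV. frame_coord Gam X z A * frame_coord Gam Y z D * connEE Gam c A D z C)"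
  unfolding tnabla_def by (rule frame_coord_frame_combination)

lemma tnabla_frame_expansion:
  "tnabla Gam c X Y z B = (\<Sum>C\<in>UNIV. frame_coord Gam (tnabla Gam c X Y) z C * Eframe Gam C z B)"
  unfolding frame_coord_tnabla by (simp add: tnabla_def)

lemma frame_coord_tnabla_Eframe:
  "frame_coord Gam (tnabla Gam c (Eframe Gam A) (Eframe Gam D)) z C = connEE Gam c A D z C"
  by (simp add: frame_coord_tnabla frame_coord_Eframe delta_sum_simps cong: if_cong)

lemma vapply_Eframe_Inl_base:
  "vapply (Eframe Gam (Inl i)) (\<lambda>w. f (fst w)) z = pdx i f (fst z)"
  by (simp add: vapply_def sum_UNIV_Plus Eframe_def pd_def pdx_def dirderiv_def cdir_def
      delta_sum_simps cong: if_cong)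

lemma vapply_Eframe_Inr_base:
  "vapply (Eframe Gam (Inr i)) (\<lambda>w. f (fst w)) z = 0"
  by (simp add: vapply_def sum_UNIV_Plus Eframe_def pd_def dirderiv_def cdir_def)

lemma lie_Eframe_Inl: "lie (Eframe Gam A) (Eframe Gam B) z (Inl h) = 0"
  by (cases A; cases B) (simp_all add: lie_def Eframe_def vapply_def pd_def dirderiv_def)

lemma frame_coord_tnabla_lie_Eframe:
  "frame_coord Gam (tnabla Gam c (lie (Eframe Gam A) (Eframe Gam B)) (Eframe Gam D)) z C = 0"
  unfolding frame_coord_tnabla frame_coord_Eframe
  by (simp add: sum_UNIV_Plus frame_coord_def lie_Eframe_Inl connEE_def)

definition frame_curv_coeff ::
    "('n::finite \<Rightarrow> 'n \<Rightarrow> 'n \<Rightarrow> real^'n \<Rightarrow> real) \<Rightarrow> ('n \<Rightarrow> 'n \<Rightarrow> real^'n \<Rightarrow> real)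
     \<Rightarrow> 'n + 'n \<Rightarrow> 'n + 'n \<Rightarrow> 'n + 'n \<Rightarrow> 'n pt \<Rightarrow> 'n + 'n \<Rightarrow> real" where
  "frame_curv_coeff Gam c A B D z C =
     vapply (Eframe Gam A) (\<lambda>w. connEE Gam c B D w C) z
     + (\<Sum>D'\<in>UNIV. connEE Gam c B D z D' * connEE Gam c A D' z C)
     - vapply (Eframe Gam B) (\<lambda>w. connEE Gam c A D w C) z
     - (\<Sum>D'\<in>UNIV. connEE Gam c A D z D' * connEE Gam c B D' z C)"

lemma frame_coord_tnabla_tnabla_Eframe:
  "frame_coord Gam (tnabla Gam c (Eframe Gam A) (tnabla Gam c (Eframe Gam B) (Eframe Gam D))) z C
   = vapply (Eframe Gam A) (\<lambda>w. connEE Gam c B D w C) z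
     + (\<Sum>D'\<in>UNIV. connEE Gam c B D z D' * connEE Gam c A D' z C)"
  by (simp add: frame_coord_tnabla frame_coord_tnabla_Eframe frame_coord_Eframe
      delta_sum_simps cong: if_cong)

lemma curv_Eframe:
  "curv (tnabla Gam c) (Eframe Gam A) (Eframe Gam B) (Eframe Gam D) z
   = (\<lambda>B'. \<Sum>C\<in>UNIV. frame_curv_coeff Gam c A B D z C * Eframe Gam C z B')"
  unfolding curv_def fun_eq_iff
  by (subst (1 2 3) tnabla_frame_expansion)
    (simp add: frame_coord_tnabla_tnabla_Eframe frame_coord_tnabla_lie_Eframe frame_curv_coeff_def
      sum_subtractf[symmetric] algebra_simps)

lemma connEE_base: "connEE Gam c A B z C = connEE Gam c A B (fst z, 0) C"
  unfolding connEE_def fst_conv ..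

lemma vapply_Eframe_Inl_connEE:
  "vapply (Eframe Gam (Inl i)) (\<lambda>w. connEE Gam c B D w C) z = pdx i (\<lambda>x. connEE Gam c B D (x, 0) C) (fst z)"
  using vapply_Eframe_Inl_base[of Gam i "\<lambda>x. connEE Gam c B D (x, 0) C" z]
  by (simp only: connEE_base[symmetric])

lemma vapply_Eframe_Inr_connEE: "vapply (Eframe Gam (Inr i)) (\<lambda>w. connEE Gam c B D w C) z = 0"
  using vapply_Eframe_Inr_base[of Gam i "\<lambda>x. connEE Gam c B D (x, 0) C" z]
  by (simp only: connEE_base[symmetric])

text \<open>In the names below, h and v mark a horizontal slot (index Inl i) and a vertical slot
  (index Inr i); e.g. hhv_h is the horizontal component of tR(E_i, E_j) E_{bar k}.\<close>

lemma frame_curv_coeff_vertical_direction: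
  assumes "\<not> (isl A \<and> isl B)"
  shows "frame_curv_coeff Gam c A B D z C = 0"
  using assms
  by (cases A; cases B; simp add: frame_curv_coeff_def vapply_Eframe_Inr_connEE; simp add: connEE_def)

lemma frame_curv_coeff_hhh_h:
  "frame_curv_coeff Gam c (Inl i) (Inl j) (Inl k) z (Inl h) = Rc Gam i j k h (fst z)"
  unfolding frame_curv_coeff_def vapply_Eframe_Inl_connEE
  by (simp add: sum_UNIV_Plus connEE_def Rc_def algebra_simps)

lemma frame_curv_coeff_hhv_h:
  "frame_curv_coeff Gam c (Inl i) (Inl j) (Inr k) z (Inl h) = 0"
  unfolding frame_curv_coeff_def vapply_Eframe_Inl_connEE
  by (simp add: sum_UNIV_Plus connEE_def)

section \<open>The Ricci identity and the vertical curvature components\<close>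

definition double_sum :: "('a::finite \<Rightarrow> 'a \<Rightarrow> real) \<Rightarrow> real" where
  "double_sum f = (\<Sum>a\<in>UNIV. \<Sum>b\<in>UNIV. f a b)"

text \<open>Rewriting every double sum to this symmetrized normal form lets the simplifier identify
  double sums that differ only by the order of the two summation indices.\<close>
lemma double_sum_symmetrize:
  "(\<Sum>a\<in>UNIV. \<Sum>b\<in>UNIV. f a b) = double_sum (\<lambda>a b. (f a b + f b a) / 2)"
proof -
  have "(\<Sum>a\<in>UNIV. \<Sum>b\<in>UNIV. f a b) = (\<Sum>a\<in>(UNIV::'a set). \<Sum>b\<in>UNIV. f b a)"
    by (rule sum.swap)
  then show ?thesis by (simp add: double_sum_def sum.distrib sum_divide_distrib[symmetric])
qed

lemma ricci_identity_components:
  fixes G dC n :: "'n::finite \<Rightarrow> 'n \<Rightarrow> 'n \<Rightarrow> real" and C :: "'n \<Rightarrow> 'n \<Rightarrow> real"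
    and dG ddC N T R :: "'n \<Rightarrow> 'n \<Rightarrow> 'n \<Rightarrow> 'n \<Rightarrow> real"
  assumes G_sym: "\<And>a b d. G a b d = G a d b"
    and ddC_sym: "ddC i j k h = ddC j i k h"
    and n: "\<And>i j k. n i j k = dC i j k - (\<Sum>a\<in>UNIV. G a i j * C a k) - (\<Sum>a\<in>UNIV. G a i k * C j a)"
    and N: "\<And>i j k h. N i j k h = ddC i j k h - (\<Sum>a\<in>UNIV. dG i a j k * C a h + G a j k * dC i a h)
                 - (\<Sum>a\<in>UNIV. dG i a j h * C k a + G a j h * dC i k a)"
    and T: "\<And>i j k h. T i j k h = N i j k h - (\<Sum>a\<in>UNIV. G a i j * n a k h) - (\<Sum>a\<in>UNIV. G a i k * n j a h)
                 - (\<Sum>a\<in>UNIV. G a i h * n j k a)"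
    and R: "\<And>i j k h. R i j k h = dG i h j k - dG j h i k + (\<Sum>a\<in>UNIV. G h i a * G a j k) - (\<Sum>a\<in>UNIV. G h j a * G a i k)"
  shows "T i j k h - T j i k h = - (\<Sum>m\<in>UNIV. R i j k m * C m h) - (\<Sum>m\<in>UNIV. R i j h m * C k m)"
  unfolding T N n R
  by (simp add: ddC_sym G_sym[of _ j i] sum_distrib_left sum_distrib_right sum_subtractf sum.distrib
      algebra_simps)
    (simp only: double_sum_symmetrize, simp add: algebra_simps)

lemma frame_curv_coeff_hhh_v_algebra:
  fixes G n :: "'n::finite \<Rightarrow> 'n \<Rightarrow> 'n \<Rightarrow> real" and N T :: "'n \<Rightarrow> 'n \<Rightarrow> 'n \<Rightarrow> 'n \<Rightarrow> real"
  assumes G_sym: "\<And>a b d. G a b d = G a d b"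
    and T: "\<And>i j k h. T i j k h = N i j k h - (\<Sum>a\<in>UNIV. G a i j * n a k h)
              - (\<Sum>a\<in>UNIV. G a i k * n j a h) - (\<Sum>a\<in>UNIV. G a i h * n j k a)"
  shows "(1/2) * (N i j k h + N i k j h - N i h j k) - (1/2) * (N j i k h + N j k i h - N j h i k)
     + (\<Sum>a\<in>UNIV. G a j k * ((1/2) * (n i a h + n a i h - n h i a)))
     - (\<Sum>a\<in>UNIV. ((1/2) * (n j k a + n k j a - n a j k)) * G a i h)
     - (\<Sum>a\<in>UNIV. G a i k * ((1/2) * (n j a h + n a j h - n h j a)))
     + (\<Sum>a\<in>UNIV. ((1/2) * (n i k a + n k i a - n a i k)) * G a j h)
   = (1/2) * ((T i k j h - T i h j k) - (T j k i h - T j h i k) + (T i j k h - T j i k h))"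
  unfolding T
  by (simp add: sum_distrib_left sum_distrib_right sum_subtractf sum.distrib algebra_simps G_sym[of _ j i])

lemma nc_eq:
  "nc Gam c i j k = (\<lambda>y. pdx i (c j k) y
     - (\<Sum>a\<in>UNIV. Gam a i j y * c a k y) - (\<Sum>a\<in>UNIV. Gam a i k y * c j a y))"
  by (simp add: fun_eq_iff nc_def)

context
  fixes U :: "(real^'n::finite) set"
    and Gam :: "'n \<Rightarrow> 'n \<Rightarrow> 'n \<Rightarrow> real^'n \<Rightarrow> real"
    and c :: "'n \<Rightarrow> 'n \<Rightarrow> real^'n \<Rightarrow> real"
    and z :: "'n pt"
  assumes U: "open U"
    and Gam_smooth: "\<forall>h a b. smooth_on U (Gam h a b)"
    and c_smooth: "\<forall>a b. smooth_on U (c a b)"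
    and zU: "fst z \<in> U"
begin

lemma differentiable_Gam [simp]: "Gam h a b differentiable (at (fst z))"
  using Gam_smooth U zU smooth_on_imp_differentiable by blast

lemma differentiable_c [simp]: "c a b differentiable (at (fst z))"
  using c_smooth U zU smooth_on_imp_differentiable by blast

lemma differentiable_pdx_c [simp]: "pdx m (c a b) differentiable (at (fst z))"
  using c_smooth U zU smooth_on_imp_differentiable smooth_on_pdx by blast

lemma differentiable_nc [simp]: "nc Gam c i j k differentiable (at (fst z))"
  by (simp add: nc_eq)

lemma pdx_nc:
  "pdx m (nc Gam c i j k) (fst z) = pdx m (pdx i (c j k)) (fst z)
   - (\<Sum>a\<in>UNIV. pdx m (Gam a i j) (fst z) * c a k (fst z) + Gam a i j (fst z) * pdx m (c a k) (fst z))
   - (\<Sum>a\<in>UNIV. pdx m (Gam a i k) (fst z) * c j a (fst z) + Gam a i k (fst z) * pdx m (c j a) (fst z))"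
  by (simp add: nc_eq pdx_diff pdx_sum pdx_mult)

lemma ricci_identity:
  assumes Gam_sym: "\<forall>h a b. \<forall>x\<in>U. Gam h a b x = Gam h b a x"
  shows "nnc Gam c i j k h (fst z) - nnc Gam c j i k h (fst z)
    = - (\<Sum>m\<in>UNIV. Rc Gam i j k m (fst z) * c m h (fst z))
      - (\<Sum>m\<in>UNIV. Rc Gam i j h m (fst z) * c k m (fst z))"
  by (rule ricci_identity_components[where G = "\<lambda>a b d. Gam a b d (fst z)" and C = "\<lambda>a b. c a b (fst z)"
      and dC = "\<lambda>m a b. pdx m (c a b) (fst z)" and dG = "\<lambda>m a b d. pdx m (Gam a b d) (fst z)"
      and ddC = "\<lambda>i j k h. pdx i (pdx j (c k h)) (fst z)" and n = "\<lambda>i j k. nc Gam c i j k (fst z)"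
      and N = "\<lambda>i j k h. pdx i (nc Gam c j k h) (fst z)"])
    (use Gam_sym zU pdx_commute[OF _ U zU] c_smooth pdx_nc in \<open>auto simp: nc_def nnc_def Rc_def\<close>)

lemma pdx_connEE_hh_v:
  "pdx m (\<lambda>x. connEE Gam c (Inl i) (Inl j) (x, 0) (Inr h)) (fst z)
   = (1/2) * (pdx m (nc Gam c i j h) (fst z) + pdx m (nc Gam c j i h) (fst z) - pdx m (nc Gam c h i j) (fst z))"
proof -
  have "(\<lambda>x. connEE Gam c (Inl i) (Inl j) (x, 0) (Inr h))
      = (\<lambda>x. (1/2) * (nc Gam c i j h x + nc Gam c j i h x - nc Gam c h i j x))"
    by (simp add: connEE_def)
  then show ?thesis
    by (simp only: pdx_cmult pdx_diff pdx_add differentiable_add differentiable_diff differentiable_nc)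
qed

lemma pdx_connEE_hv_v:
  "pdx m (\<lambda>x. connEE Gam c (Inl i) (Inr j) (x, 0) (Inr h)) (fst z) = - pdx m (Gam j i h) (fst z)"
  by (simp add: connEE_def pdx_minus)

lemma frame_curv_coeff_hhv_v:
  "frame_curv_coeff Gam c (Inl i) (Inl j) (Inr k) z (Inr h) = Rc Gam j i h k (fst z)"
  unfolding frame_curv_coeff_def vapply_Eframe_Inl_connEE pdx_connEE_hv_v
  by (simp add: sum_UNIV_Plus connEE_def Rc_def algebra_simps)

lemma frame_curv_coeff_hhh_v:
  assumes Gam_sym: "\<forall>h a b. \<forall>x\<in>U. Gam h a b x = Gam h b a x"
  shows "frame_curv_coeff Gam c (Inl i) (Inl j) (Inl k) z (Inr h) =
     (1/2) * ( (nnc Gam c i k j h (fst z) - nnc Gam c i h j k (fst z))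
             - (nnc Gam c j k i h (fst z) - nnc Gam c j h i k (fst z))
             - (\<Sum>m\<in>UNIV. Rc Gam i j k m (fst z) * c m h (fst z))
             - (\<Sum>m\<in>UNIV. Rc Gam i j h m (fst z) * c k m (fst z)) )"
proof -
  let ?n = "\<lambda>i j k. nc Gam c i j k (fst z)" and ?G = "\<lambda>a b d. Gam a b d (fst z)"
    and ?N = "\<lambda>i j k h. pdx i (nc Gam c j k h) (fst z)" and ?T = "\<lambda>i j k h. nnc Gam c i j k h (fst z)"
  have "frame_curv_coeff Gam c (Inl i) (Inl j) (Inl k) z (Inr h) =
      (1/2) * (?N i j k h + ?N i k j h - ?N i h j k) - (1/2) * (?N j i k h + ?N j k i h - ?N j h i k)
     + (\<Sum>a\<in>UNIV. ?G a j k * ((1/2) * (?n i a h + ?n a i h - ?n h i a)))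
     - (\<Sum>a\<in>UNIV. ((1/2) * (?n j k a + ?n k j a - ?n a j k)) * ?G a i h)
     - (\<Sum>a\<in>UNIV. ?G a i k * ((1/2) * (?n j a h + ?n a j h - ?n h j a)))
     + (\<Sum>a\<in>UNIV. ((1/2) * (?n i k a + ?n k i a - ?n a i k)) * ?G a j h)"
    unfolding frame_curv_coeff_def vapply_Eframe_Inl_connEE pdx_connEE_hh_v
    by (simp add: sum_UNIV_Plus connEE_def sum_subtractf sum_negf algebra_simps)
  also have "\<dots> = (1/2) * ((?T i k j h - ?T i h j k) - (?T j k i h - ?T j h i k) + (?T i j k h - ?T j i k h))"
    using Gam_sym zU by (intro frame_curv_coeff_hhh_v_algebra) (simp_all add: nnc_def)
  finally show ?thesis
    unfolding ricci_identity[OF Gam_sym] by simp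
qed

end

theorem proposition4:
  fixes U :: "(real^'n::finite) set"
    and Gam :: "'n \<Rightarrow> 'n \<Rightarrow> 'n \<Rightarrow> real^'n \<Rightarrow> real"
    and c :: "'n \<Rightarrow> 'n \<Rightarrow> real^'n \<Rightarrow> real"
    and z :: "'n pt" and i j k :: 'n
  assumes "open U"
    and "\<forall>h a b. smooth_on U (Gam h a b)"
    and "\<forall>a b. smooth_on U (c a b)"
    and "\<forall>h a b. \<forall>x\<in>U. Gam h a b x = Gam h b a x"
    and "\<forall>a b. \<forall>x\<in>U. c a b x = c b a x"
    and "fst z \<in> U"
  shows
    "curv (tnabla Gam c) (Eframe Gam (Inl i)) (Eframe Gam (Inl j)) (Eframe Gam (Inl k)) z =
       (\<lambda>B. \<Sum>h\<in>UNIV. Rc Gam i j k h (fst z) * Eframe Gam (Inl h) z B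
          + (1/2) * ( (nnc Gam c i k j h (fst z) - nnc Gam c i h j k (fst z))
                    - (nnc Gam c j k i h (fst z) - nnc Gam c j h i k (fst z))
                    - (\<Sum>m\<in>UNIV. Rc Gam i j k m (fst z) * c m h (fst z))
                    - (\<Sum>m\<in>UNIV. Rc Gam i j h m (fst z) * c k m (fst z)) )
            * Eframe Gam (Inr h) z B)
   \<and> curv (tnabla Gam c) (Eframe Gam (Inl i)) (Eframe Gam (Inl j)) (Eframe Gam (Inr k)) z =
       (\<lambda>B. \<Sum>h\<in>UNIV. Rc Gam j i h k (fst z) * Eframe Gam (Inr h) z B)
   \<and> curv (tnabla Gam c) (Eframe Gam (Inl i)) (Eframe Gam (Inr j)) (Eframe Gam (Inl k)) z = (\<lambda>B. 0)
   \<and> curv (tnabla Gam c) (Eframe Gam (Inl i)) (Eframe Gam (Inr j)) (Eframe Gam (Inr k)) z = (\<lambda>B. 0)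
   \<and> curv (tnabla Gam c) (Eframe Gam (Inr i)) (Eframe Gam (Inl j)) (Eframe Gam (Inl k)) z = (\<lambda>B. 0)
   \<and> curv (tnabla Gam c) (Eframe Gam (Inr i)) (Eframe Gam (Inl j)) (Eframe Gam (Inr k)) z = (\<lambda>B. 0)
   \<and> curv (tnabla Gam c) (Eframe Gam (Inr i)) (Eframe Gam (Inr j)) (Eframe Gam (Inl k)) z = (\<lambda>B. 0)
   \<and> curv (tnabla Gam c) (Eframe Gam (Inr i)) (Eframe Gam (Inr j)) (Eframe Gam (Inr k)) z = (\<lambda>B. 0)"
proof -
  \<comment> \<open>The Ricci identity holds for every (0,2)-tensor.\<close>
  note frame_curv_coeffs = frame_curv_coeff_hhh_h frame_curv_coeff_hhh_v[OF assms(1-3,6,4)]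
    frame_curv_coeff_hhv_h frame_curv_coeff_hhv_v[OF assms(1-3,6)] frame_curv_coeff_vertical_direction
  show ?thesis
    by (simp add: curv_Eframe sum_UNIV_Plus sum.distrib frame_curv_coeffs)
qed

end
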